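(* Let $A,B,C\in\operatorname{Sym}(n,\mathbb{R})$, where $A,B$ are linearly independent, form a non-dissipative pair, and satisfy $\operatorname{maxrank}\{A,B\}\ge17$, and where $Q_C$ vanishes on $\{Q_A=0\}\cap\{Q_B=0\}$. Assume that at least one connected component of $\mathcal{N}$ spans $\mathbb{R}^n$. Then $C$ is a linear combination of $A$ and $B$.
   Context: $Q_M(z)={}^tzMz$. Non-dissipative pair: $0$ is the only positive semidefinite element of $\operatorname{span}_{\mathbb{R}}\{A,B\}$; $\operatorname{maxrank}\{A,B\}$ is the maximal rank of elements of this span. $\mathcal{N}:=\{z\in\mathbb{R}^n:Q_A(z)=Q_B(z)=0,\ Az\text{ and }Bz\text{ linearly independent}\}$; a connected component spans $\mathbb{R}^n$ if its linear span is $\mathbb{R}^n$. No symplectic structure is assumed. *)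

theory Defs
  imports "HOL-Analysis.Analysis"
begin

definition Q :: "real^'n^'n \<Rightarrow> real^'n \<Rightarrow> real" where
  "Q M z = z \<bullet> (M *v z)"

definition sym_mat :: "real^'n^'n \<Rightarrow> bool" where
  "sym_mat M \<longleftrightarrow> transpose M = M"

definition psd :: "real^'n^'n \<Rightarrow> bool" where
  "psd M \<longleftrightarrow> (\<forall>z. Q M z \<ge> 0)"

definition pencil :: "real^'n^'n \<Rightarrow> real^'n^'n \<Rightarrow> (real^'n^'n) set" where
  "pencil A B = {a *\<^sub>R A + b *\<^sub>R B | a b. True}"

definition non_dissipative :: "real^'n^'n \<Rightarrow> real^'n^'n \<Rightarrow> bool" where
  "non_dissipative A B \<longleftrightarrow> (\<forall>M\<in>pencil A B. psd M \<longrightarrow> M = 0)"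

definition maxrank :: "real^'n^'n \<Rightarrow> real^'n^'n \<Rightarrow> nat" where
  "maxrank A B = Max (rank ` pencil A B)"

definition Nset :: "real^'n^'n \<Rightarrow> real^'n^'n \<Rightarrow> (real^'n) set" where
  "Nset A B = {z. Q A z = 0 \<and> Q B z = 0 \<and> independent {A *v z, B *v z} \<and> A *v z \<noteq> B *v z}"

end

theory Submission
  imports Defs
begin

text \<open>At a point \<open>z\<close> of \<open>\<N>\<close> the set \<open>{Q\<^sub>A = Q\<^sub>B = 0}\<close> is a smooth submanifold of
  codimension 2 with normal space \<open>span {A z, B z}\<close>. Vanishing of \<open>Q\<^sub>C\<close> on it gives, to first
  order, \<open>C z = a(z) A z + b(z) B z\<close>, and to second order \<open>rank (C - a(z) A - b(z) B) \<le> 4\<close>,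
  with \<open>a, b\<close> continuous. If \<open>a, b\<close> are constant on a component \<open>K\<close> spanning \<open>\<real>\<^sup>n\<close>, then
  \<open>C = a A + b B\<close>. Otherwise, for \<open>x, y \<in> K\<close> the difference \<open>(a(x) - a(y)) A + (b(x) - b(y)) B\<close>
  has rank at most 8. Since the image of \<open>K\<close> under \<open>(a, b)\<close> is connected and not a point, some
  \<open>z \<in> K\<close> has coefficients different from those at every point of a basis contained in \<open>K\<close>. Two
  non-parallel differences with \<open>z\<close> would bound the rank of the whole pencil by 16; if all are
  parallel to some \<open>d \<noteq> 0\<close>, the symmetry of \<open>A, B, C\<close> makes \<open>d\<^sub>1 A z + d\<^sub>2 B z\<close> orthogonal to
  that basis, contradicting the independence of \<open>A z, B z\<close>.\<close>

section \<open>Quadratic forms and ranks of pencils\<close>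

lemma sym_mat_inner_commute:
  fixes M :: "real^'n^'n"
  assumes "sym_mat M"
  shows "x \<bullet> (M *v y) = y \<bullet> (M *v x)"
  by (metis assms sym_mat_def dot_lmul_matrix transpose_matrix_vector inner_commute)

lemma Q_add_scaleR:
  fixes M :: "real^'n^'n"
  assumes "sym_mat M"
  shows "Q M (z + s *\<^sub>R h) = Q M z + 2 * s * (h \<bullet> (M *v z)) + s\<^sup>2 * Q M h"
  using sym_mat_inner_commute[OF assms, of z h]
  by (simp add: Q_def matrix_vector_right_distrib matrix_vector_mult_scaleR inner_add_left
      inner_add_right algebra_simps power2_eq_square)

lemma Q_has_derivative:
  fixes M :: "real^'n^'n"
  assumes "sym_mat M"
  shows "(Q M has_derivative (\<lambda>h. 2 * (h \<bullet> (M *v p)))) (at p)"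
proof -
  have "((\<lambda>x. x \<bullet> (M *v x)) has_derivative (\<lambda>h. p \<bullet> (M *v h) + h \<bullet> (M *v p))) (at p)"
    by (intro has_derivative_inner has_derivative_ident
        bounded_linear_imp_has_derivative matrix_vector_mul_bounded_linear)
  moreover have "(\<lambda>h. p \<bullet> (M *v h) + h \<bullet> (M *v p)) = (\<lambda>h. 2 * (h \<bullet> (M *v p)))"
    using sym_mat_inner_commute[OF assms] by (auto simp: fun_eq_iff)
  ultimately show ?thesis
    unfolding Q_def[abs_def] by simp
qed

lemma rank_scaleR_le:
  fixes X :: "real^'n^'m"
  shows "rank (c *\<^sub>R X) \<le> rank X"
proof -
  have "(c *\<^sub>R X) *v x = X *v (c *\<^sub>R x)" for x
    by (simp add: scaleR_matrix_vector_assoc matrix_vector_mult_scaleR)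
  then have "range (\<lambda>x. (c *\<^sub>R X) *v x) \<subseteq> range (\<lambda>x. X *v x)"
    by auto
  then show ?thesis
    unfolding rank_dim_range by (rule dim_subset)
qed

lemma rank_add_le:
  fixes X Y :: "real^'n^'m"
  shows "rank (X + Y) \<le> rank X + rank Y"
proof -
  let ?RX = "range (\<lambda>x. X *v x)" and ?RY = "range (\<lambda>x. Y *v x)"
  have sub: "subspace ?RX" "subspace ?RY"
    by (simp_all add: linear_subspace_image matrix_vector_mul_linear)
  have "range (\<lambda>x. (X + Y) *v x) \<subseteq> {x + y |x y. x \<in> ?RX \<and> y \<in> ?RY}"
    by (auto simp: matrix_vector_mult_add_rdistrib)
  then have "rank (X + Y) \<le> dim {x + y |x y. x \<in> ?RX \<and> y \<in> ?RY}"
    unfolding rank_dim_range by (rule dim_subset)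
  also have "\<dots> \<le> rank X + rank Y"
    using dim_sums_Int[OF sub] by (simp add: rank_dim_range)
  finally show ?thesis .
qed

lemma rank_diff_le:
  fixes X Y :: "real^'n^'m"
  shows "rank (X - Y) \<le> rank X + rank Y"
  using rank_add_le[of X "(-1) *\<^sub>R Y"] rank_scaleR_le[of "-1" Y] by simp

lemma pencil_eq_combination:
  fixes A B :: "'a::real_vector"
  assumes "d1 * e2 - d2 * e1 \<noteq> 0"
  shows "\<alpha> *\<^sub>R A + \<beta> *\<^sub>R B =
           ((\<alpha> * e2 - \<beta> * e1) / (d1 * e2 - d2 * e1)) *\<^sub>R (d1 *\<^sub>R A + d2 *\<^sub>R B)
         + ((\<beta> * d1 - \<alpha> * d2) / (d1 * e2 - d2 * e1)) *\<^sub>R (e1 *\<^sub>R A + e2 *\<^sub>R B)"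
proof -
  let ?D = "d1 * e2 - d2 * e1"
  have "(\<alpha> * e2 - \<beta> * e1) * d1 + (\<beta> * d1 - \<alpha> * d2) * e1 = \<alpha> * ?D"
       "(\<alpha> * e2 - \<beta> * e1) * d2 + (\<beta> * d1 - \<alpha> * d2) * e2 = \<beta> * ?D"
    by (simp_all add: algebra_simps)
  then have "((\<alpha> * e2 - \<beta> * e1) / ?D) * d1 + ((\<beta> * d1 - \<alpha> * d2) / ?D) * e1 = \<alpha>"
       "((\<alpha> * e2 - \<beta> * e1) / ?D) * d2 + ((\<beta> * d1 - \<alpha> * d2) / ?D) * e2 = \<beta>"
    using assms by (simp_all add: add_divide_distrib[symmetric] divide_simps)
  moreover have "l *\<^sub>R (d1 *\<^sub>R A + d2 *\<^sub>R B) + m *\<^sub>R (e1 *\<^sub>R A + e2 *\<^sub>R B)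
      = (l * d1 + m * e1) *\<^sub>R A + (l * d2 + m * e2) *\<^sub>R B" for l m
    by (simp add: algebra_simps)
  ultimately show ?thesis
    by simp
qed

lemma rank_pencil_le_of_two_independent:
  fixes A B :: "real^'n^'m"
  assumes "d1 * e2 - d2 * e1 \<noteq> 0"
    and "rank (d1 *\<^sub>R A + d2 *\<^sub>R B) \<le> r" and "rank (e1 *\<^sub>R A + e2 *\<^sub>R B) \<le> r"
  shows "rank (\<alpha> *\<^sub>R A + \<beta> *\<^sub>R B) \<le> 2 * r"
proof -
  let ?D = "d1 * e2 - d2 * e1"
  have "rank (\<alpha> *\<^sub>R A + \<beta> *\<^sub>R B)
      \<le> rank (((\<alpha> * e2 - \<beta> * e1) / ?D) *\<^sub>R (d1 *\<^sub>R A + d2 *\<^sub>R B))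
        + rank (((\<beta> * d1 - \<alpha> * d2) / ?D) *\<^sub>R (e1 *\<^sub>R A + e2 *\<^sub>R B))"
    by (subst pencil_eq_combination[OF assms(1)]) (rule rank_add_le)
  also have "\<dots> \<le> rank (d1 *\<^sub>R A + d2 *\<^sub>R B) + rank (e1 *\<^sub>R A + e2 *\<^sub>R B)"
    by (intro add_mono rank_scaleR_le)
  finally show ?thesis
    using assms(2,3) by linarith
qed

lemma maxrank_attained:
  fixes A B :: "real^'n^'n"
  obtains \<alpha> \<beta> where "rank (\<alpha> *\<^sub>R A + \<beta> *\<^sub>R B) = maxrank A B"
proof -
  have "finite (rank ` pencil A B)"
    by (rule finite_subset[of _ "{..CARD('n)}"]) (auto intro: le_trans[OF rank_bound])
  moreover have "rank ` pencil A B \<noteq> {}"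
    by (auto simp: pencil_def)
  ultimately have "maxrank A B \<in> rank ` pencil A B"
    unfolding maxrank_def by (rule Max_in)
  then show ?thesis
    using that by (auto simp: pencil_def)
qed

lemma lincomb_eq_0_if_parallel:
  fixes d1 d2 e1 e2 x y :: real
  assumes "e1 \<noteq> 0 \<or> e2 \<noteq> 0" and "e1 * x + e2 * y = 0" and "d1 * e2 - d2 * e1 = 0"
  shows "d1 * x + d2 * y = 0"
proof -
  have "e1 * (d1 * x + d2 * y) = d1 * (e1 * x + e2 * y) - (d1 * e2 - d2 * e1) * y"
       "e2 * (d1 * x + d2 * y) = d2 * (e1 * x + e2 * y) + (d1 * e2 - d2 * e1) * x"
    by (simp_all add: algebra_simps)
  then show ?thesis
    using assms by auto
qed

lemma spanning_set_nonempty: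
  fixes S :: "'a::euclidean_space set"
  assumes "span S = UNIV"
  shows "S \<noteq> {}"
proof
  assume "S = {}"
  then have "(UNIV :: 'a set) = {0}"
    using assms by simp
  moreover obtain b :: 'a where "b \<in> Basis"
    using nonempty_Basis by blast
  ultimately show False
    using nonzero_Basis by blast
qed

section \<open>Gram determinant and dual basis\<close>

definition gram_det :: "'a::real_inner \<Rightarrow> 'a \<Rightarrow> real" where
  "gram_det u w = (u \<bullet> u) * (w \<bullet> w) - (u \<bullet> w)\<^sup>2"

text \<open>The basis of \<open>span {u, w}\<close> dual to \<open>u, w\<close>, obtained by inverting the Gram matrix.\<close>

definition dual_fst :: "'a::real_inner \<Rightarrow> 'a \<Rightarrow> 'a" where
  "dual_fst u w = ((w \<bullet> w) / gram_det u w) *\<^sub>R u - ((u \<bullet> w) / gram_det u w) *\<^sub>R w"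

definition dual_snd :: "'a::real_inner \<Rightarrow> 'a \<Rightarrow> 'a" where
  "dual_snd u w = ((u \<bullet> u) / gram_det u w) *\<^sub>R w - ((u \<bullet> w) / gram_det u w) *\<^sub>R u"

lemma gram_det_nonzero:
  fixes u w :: "'a::real_inner"
  assumes "independent {u, w}" and "u \<noteq> w"
  shows "gram_det u w \<noteq> 0"
proof
  assume gram: "gram_det u w = 0"
  have "w \<noteq> 0"
    using assms(1) dependent_zero[of "{u, w}"] by auto
  then have ww: "w \<bullet> w \<noteq> 0"
    by simp
  define y where "y = (w \<bullet> w) *\<^sub>R u - (u \<bullet> w) *\<^sub>R w"
  have "y \<bullet> y = (w \<bullet> w) * gram_det u w"
    by (simp add: y_def gram_det_def inner_diff_left inner_diff_right inner_commute[of w u]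
        algebra_simps power2_eq_square)
  then have "(w \<bullet> w) *\<^sub>R u = (u \<bullet> w) *\<^sub>R w"
    using gram by (simp add: y_def)
  then have "u = ((u \<bullet> w) / (w \<bullet> w)) *\<^sub>R w"
    using ww by (metis (no_types, lifting) divide_inverse_commute scaleR_scaleR
        inverse_eq_divide right_inverse scaleR_one)
  then have "u \<in> span {w}"
    by (metis span_base span_scale singletonI)
  then show False
    using assms independent_insert[of u "{w}"] by auto
qed

lemma gram_det_nonzero_imp_independent:
  fixes u w :: "'a::real_inner"
  assumes "gram_det u w \<noteq> 0" and "d1 *\<^sub>R u + d2 *\<^sub>R w = 0"
  shows "d1 = 0 \<and> d2 = 0"
proof -
  have "d1 * (u \<bullet> u) + d2 * (u \<bullet> w) = 0" "d1 * (u \<bullet> w) + d2 * (w \<bullet> w) = 0"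
    using arg_cong[OF assms(2), of "\<lambda>x. x \<bullet> u"] arg_cong[OF assms(2), of "\<lambda>x. x \<bullet> w"]
    by (simp_all add: inner_add_left inner_commute[of w u])
  then have "d1 * gram_det u w = 0" "d2 * gram_det u w = 0"
    unfolding gram_det_def by algebra+
  then show ?thesis
    using assms(1) by simp
qed

lemma inner_dual:
  fixes u w :: "'a::real_inner"
  assumes "gram_det u w \<noteq> 0"
  shows "dual_fst u w \<bullet> u = 1" "dual_fst u w \<bullet> w = 0"
    and "dual_snd u w \<bullet> u = 0" "dual_snd u w \<bullet> w = 1"
  using assms
  by (simp_all add: dual_fst_def dual_snd_def inner_diff_left inner_commute[of w u] field_simps)
    (simp_all add: gram_det_def power2_eq_square)

lemma inner_dual_right:
  fixes u w :: "'a::real_inner"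
  shows "c \<bullet> dual_fst u w = ((w \<bullet> w) * (c \<bullet> u) - (u \<bullet> w) * (c \<bullet> w)) / gram_det u w"
    and "c \<bullet> dual_snd u w = ((u \<bullet> u) * (c \<bullet> w) - (u \<bullet> w) * (c \<bullet> u)) / gram_det u w"
  by (simp_all add: dual_fst_def dual_snd_def inner_diff_right diff_divide_distrib)

lemma dual_residual_orthogonal:
  fixes u w :: "'a::real_inner"
  assumes "gram_det u w \<noteq> 0"
  shows "(y - (y \<bullet> u) *\<^sub>R dual_fst u w - (y \<bullet> w) *\<^sub>R dual_snd u w) \<bullet> u = 0"
    and "(y - (y \<bullet> u) *\<^sub>R dual_fst u w - (y \<bullet> w) *\<^sub>R dual_snd u w) \<bullet> w = 0"
  using inner_dual[OF assms] by (simp_all add: inner_diff_left)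

lemma projection_residual_orthogonal:
  fixes u w :: "'a::real_inner"
  assumes "gram_det u w \<noteq> 0"
  shows "(c - (c \<bullet> dual_fst u w) *\<^sub>R u - (c \<bullet> dual_snd u w) *\<^sub>R w) \<bullet> u = 0"
    and "(c - (c \<bullet> dual_fst u w) *\<^sub>R u - (c \<bullet> dual_snd u w) *\<^sub>R w) \<bullet> w = 0"
proof -
  let ?X = "(w \<bullet> w) * (c \<bullet> u) - (u \<bullet> w) * (c \<bullet> w)"
    and ?Y = "(u \<bullet> u) * (c \<bullet> w) - (u \<bullet> w) * (c \<bullet> u)"
  have "?X * (u \<bullet> u) + ?Y * (u \<bullet> w) = (c \<bullet> u) * gram_det u w"
       "?X * (u \<bullet> w) + ?Y * (w \<bullet> w) = (c \<bullet> w) * gram_det u w"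
    by (simp_all add: gram_det_def power2_eq_square algebra_simps)
  then have "(c \<bullet> dual_fst u w) * (u \<bullet> u) + (c \<bullet> dual_snd u w) * (u \<bullet> w) = c \<bullet> u"
       "(c \<bullet> dual_fst u w) * (u \<bullet> w) + (c \<bullet> dual_snd u w) * (w \<bullet> w) = c \<bullet> w"
    using assms unfolding inner_dual_right by (simp_all add: divide_simps)
  then show "(c - (c \<bullet> dual_fst u w) *\<^sub>R u - (c \<bullet> dual_snd u w) *\<^sub>R w) \<bullet> u = 0"
    and "(c - (c \<bullet> dual_fst u w) *\<^sub>R u - (c \<bullet> dual_snd u w) *\<^sub>R w) \<bullet> w = 0"
    by (simp_all add: inner_diff_left inner_commute[of w u] algebra_simps)
qed

lemma eq_projection_if_orthogonal_to_complement:
  fixes u w c :: "'a::real_inner"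
  assumes "gram_det u w \<noteq> 0"
    and "\<And>x. x \<bullet> u = 0 \<Longrightarrow> x \<bullet> w = 0 \<Longrightarrow> x \<bullet> c = 0"
  shows "c = (c \<bullet> dual_fst u w) *\<^sub>R u + (c \<bullet> dual_snd u w) *\<^sub>R w"
proof -
  define y where "y = c - (c \<bullet> dual_fst u w) *\<^sub>R u - (c \<bullet> dual_snd u w) *\<^sub>R w"
  have yu: "y \<bullet> u = 0" "y \<bullet> w = 0"
    unfolding y_def by (fact projection_residual_orthogonal[OF assms(1)])+
  then have "y \<bullet> y = y \<bullet> c"
    by (simp add: y_def inner_diff_right)
  also have "\<dots> = 0"
    using assms(2) yu by blast
  finally have "y = 0"
    by simp
  then show ?thesis
    by (simp add: y_def algebra_simps)
qed

lemma rank_le_4_if_form_vanishes_on_complement: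
  fixes M :: "real^'n^'n" and u w :: "real^'n"
  assumes "gram_det u w \<noteq> 0"
    and "\<And>x t. x \<bullet> u = 0 \<Longrightarrow> x \<bullet> w = 0 \<Longrightarrow> t \<bullet> u = 0 \<Longrightarrow> t \<bullet> w = 0 \<Longrightarrow> x \<bullet> (M *v t) = 0"
  shows "rank M \<le> 4"
proof -
  define r1 r2 where "r1 = dual_fst u w" and "r2 = dual_snd u w"
  define S where "S = {u, w, M *v r1, M *v r2}"
  have "M *v y \<in> span S" for y
  proof -
    define t where "t = y - (y \<bullet> u) *\<^sub>R r1 - (y \<bullet> w) *\<^sub>R r2"
    have t: "t \<bullet> u = 0" "t \<bullet> w = 0"
      unfolding t_def r1_def r2_def by (fact dual_residual_orthogonal[OF assms(1)])+
    have "M *v t = ((M *v t) \<bullet> r1) *\<^sub>R u + ((M *v t) \<bullet> r2) *\<^sub>R w"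
      unfolding r1_def r2_def
      by (rule eq_projection_if_orthogonal_to_complement[OF assms(1)]) (use assms(2) t in blast)
    then have "M *v t \<in> span S"
      by (metis S_def span_add span_scale span_base insertI1 insertI2)
    moreover have "M *v y = M *v t + (y \<bullet> u) *\<^sub>R (M *v r1) + (y \<bullet> w) *\<^sub>R (M *v r2)"
      by (simp add: t_def matrix_vector_mult_diff_distrib matrix_vector_mult_scaleR)
    ultimately show ?thesis
      by (simp add: S_def span_add span_scale span_base)
  qed
  then have "rank M \<le> card S"
    unfolding rank_dim_range by (intro dim_le_card) (auto simp: S_def)
  also have "\<dots> \<le> 4"
    using card_length[of "[u, w, M *v r1, M *v r2]"] by (simp add: S_def)
  finally show ?thesis .
qed

section \<open>Limits, connectedness and the inverse function theorem\<close>

lemma tendsto_unique_eventually_eq: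
  fixes f :: "'a::perfect_space \<Rightarrow> 'b::t2_space"
  assumes "(f \<longlongrightarrow> l) (at x)" and "\<forall>\<^sub>F y in at x. f y = c"
  shows "l = c"
  using tendsto_unique[OF at_neq_bot assms(1) tendsto_eventually[OF assms(2)]] .

lemma connected_image_avoids_finite:
  fixes f :: "'a::topological_space \<Rightarrow> 'b::metric_space"
  assumes "connected K" and "continuous_on K f" and "finite S"
    and "x \<in> K" and "y \<in> K" and "f x \<noteq> f y"
  obtains z where "z \<in> K" and "f z \<notin> f ` S"
proof -
  have "connected (f ` K)"
    using assms(2,1) by (rule connected_continuous_image)
  moreover have "\<nexists>a. f ` K = {a}"
    using assms(4-6) by (metis imageI singletonD)
  ultimately have "infinite (f ` K)"
    using assms(4) connected_finite_iff_sing by blast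
  then have "\<not> f ` K \<subseteq> f ` S"
    using assms(3) finite_subset by blast
  then show ?thesis
    using that by blast
qed

lemma has_vector_derivative_imp_tendsto_quotient:
  fixes \<gamma> :: "real \<Rightarrow> 'a::real_normed_vector"
  assumes "(\<gamma> has_vector_derivative v) (at x)"
  shows "((\<lambda>s. (\<gamma> s - \<gamma> x) /\<^sub>R (s - x)) \<longlongrightarrow> v) (at x)"
proof -
  have "((\<lambda>s. norm (\<gamma> s - \<gamma> x - (s - x) *\<^sub>R v) / norm (s - x)) \<longlongrightarrow> 0) (at x)"
    using assms by (simp add: has_vector_derivative_def has_derivative_iff_norm)
  moreover have "\<forall>\<^sub>F s in at x. norm (\<gamma> s - \<gamma> x - (s - x) *\<^sub>R v) / norm (s - x)
                                = norm ((\<gamma> s - \<gamma> x) /\<^sub>R (s - x) - v)"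
  proof (rule eventually_at_filter[THEN iffD2, OF always_eventually], intro allI impI)
    fix s :: real
    assume "s \<noteq> x"
    then have "(\<gamma> s - \<gamma> x) /\<^sub>R (s - x) - v = (\<gamma> s - \<gamma> x - (s - x) *\<^sub>R v) /\<^sub>R (s - x)"
      by (simp add: scaleR_diff_right)
    then show "norm (\<gamma> s - \<gamma> x - (s - x) *\<^sub>R v) / norm (s - x) = norm ((\<gamma> s - \<gamma> x) /\<^sub>R (s - x) - v)"
      by (simp add: divide_inverse_commute)
  qed
  ultimately have "((\<lambda>s. norm ((\<gamma> s - \<gamma> x) /\<^sub>R (s - x) - v)) \<longlongrightarrow> 0) (at x)"
    by (rule Lim_transform_eventually)
  then show ?thesis
    by (simp add: tendsto_norm_zero_iff LIM_zero_iff)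
qed

lemma curve_through_local_inverse:
  fixes \<Phi> :: "'a::euclidean_space \<Rightarrow> 'a" and f' :: "'a \<Rightarrow> 'a \<Rightarrow>\<^sub>L 'a"
  assumes der: "\<And>x. (\<Phi> has_derivative blinfun_apply (f' x)) (at x)"
    and cont: "continuous_on UNIV f'"
    and inj: "inj (blinfun_apply (f' z))"
  obtains h where "(h \<longlongrightarrow> v) (at 0)"
    and "\<forall>\<^sub>F s in at 0. \<Phi> (z + s *\<^sub>R h s) = \<Phi> z + s *\<^sub>R f' z v"
proof -
  obtain gi where gi: "linear gi" "gi \<circ> blinfun_apply (f' z) = id"
    using linear_injective_left_inverse[OF _ inj] blinfun.bounded_linear_right bounded_linear.linear
    by blast
  have "blinfun_apply (Blinfun gi) = gi"
    using gi(1) by (simp add: bounded_linear_Blinfun_apply linear_conv_bounded_linear)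
  then have "Blinfun gi o\<^sub>L f' z = id_blinfun"
    by (intro blinfun_eqI) (simp add: gi(2) pointfree_idE)
  then obtain U V g g' where V: "open V" "\<Phi> z \<in> V" and U: "z \<in> U"
    and hom: "homeomorphism U V \<Phi> g"
    and g_der: "\<And>y. y \<in> V \<Longrightarrow> (g has_derivative g' y) (at y)"
    and g'_eq: "\<And>y. y \<in> V \<Longrightarrow> g' y = inv (blinfun_apply (f' (g y)))"
    by (rule inverse_function_theorem[OF open_UNIV der cont UNIV_I]) blast
  have gz: "g (\<Phi> z) = z"
    using hom U by (simp add: homeomorphism_def)
  define \<gamma> where "\<gamma> s = g (\<Phi> z + s *\<^sub>R f' z v)" for s :: real
  have "((\<lambda>s::real. \<Phi> z + s *\<^sub>R f' z v) has_derivative (\<lambda>s. s *\<^sub>R f' z v)) (at 0)"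
    by (auto intro!: derivative_eq_intros)
  then have "(g \<circ> (\<lambda>s. \<Phi> z + s *\<^sub>R f' z v) has_derivative g' (\<Phi> z) \<circ> (\<lambda>s. s *\<^sub>R f' z v)) (at 0)"
    by (rule diff_chain_at) (use g_der[OF V(2)] in simp)
  moreover have "g' (\<Phi> z) (s *\<^sub>R f' z v) = s *\<^sub>R v" for s
    using g'_eq[OF V(2)] inj by (simp add: gz blinfun.scaleR_right[symmetric] inv_f_f)
  ultimately have "(\<gamma> has_vector_derivative v) (at 0)"
    by (simp add: has_vector_derivative_def \<gamma>_def[abs_def] o_def)
  then have "((\<lambda>s. (\<gamma> s - z) /\<^sub>R s) \<longlongrightarrow> v) (at 0)"
    using has_vector_derivative_imp_tendsto_quotient by (fastforce simp: \<gamma>_def gz)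
  moreover have "\<forall>\<^sub>F s in at 0. \<Phi> z + s *\<^sub>R f' z v \<in> V"
    using V by (intro topological_tendstoD) (auto intro!: tendsto_eq_intros)
  then have "\<forall>\<^sub>F s in at 0. \<Phi> (z + s *\<^sub>R ((\<gamma> s - z) /\<^sub>R s)) = \<Phi> z + s *\<^sub>R f' z v"
    unfolding eventually_at_filter
    by eventually_elim (use hom in \<open>auto simp: \<gamma>_def homeomorphism_def\<close>)
  ultimately show ?thesis
    using that by blast
qed

section \<open>Curves through regular points of the base locus\<close>

locale sym_pair =
  fixes A B :: "real^'n^'n"
  assumes sym_A: "sym_mat A" and sym_B: "sym_mat B"
begin

definition regular_point :: "real^'n \<Rightarrow> bool" where
  "regular_point z \<longleftrightarrow> Q A z = 0 \<and> Q B z = 0 \<and> gram_det (A *v z) (B *v z) \<noteq> 0"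

lemma Nset_regular: "z \<in> Nset A B \<Longrightarrow> regular_point z"
  using gram_det_nonzero[of "A *v z" "B *v z"] by (simp add: Nset_def regular_point_def)

lemma isCont_gram_det: "isCont (\<lambda>x. gram_det (A *v x) (B *v x)) z"
  unfolding gram_det_def by (intro continuous_intros)

text \<open>The components of \<open>straighten z\<close> along \<open>A z, B z\<close> are \<open>Q A, Q B\<close>, so it maps the base locus
  into the orthogonal complement of \<open>{A z, B z}\<close>; at a regular point \<open>z\<close> it is a local
  diffeomorphism.\<close>

definition straighten :: "real^'n \<Rightarrow> real^'n \<Rightarrow> real^'n" where
  "straighten z p = p + (Q A p - p \<bullet> (A *v z)) *\<^sub>R dual_fst (A *v z) (B *v z)
                      + (Q B p - p \<bullet> (B *v z)) *\<^sub>R dual_snd (A *v z) (B *v z)"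

definition straighten_deriv :: "real^'n \<Rightarrow> real^'n \<Rightarrow> real^'n \<Rightarrow> real^'n" where
  "straighten_deriv z x h = h + (2 * (h \<bullet> (A *v x)) - h \<bullet> (A *v z)) *\<^sub>R dual_fst (A *v z) (B *v z)
                              + (2 * (h \<bullet> (B *v x)) - h \<bullet> (B *v z)) *\<^sub>R dual_snd (A *v z) (B *v z)"

lemma bounded_linear_straighten_deriv: "bounded_linear (straighten_deriv z x)"
  unfolding straighten_deriv_def by (intro bounded_linear_intros)

lemma straighten_has_derivative: "(straighten z has_derivative straighten_deriv z x) (at x)"
  unfolding straighten_def[abs_def] straighten_deriv_def
  by (intro has_derivative_add has_derivative_diff has_derivative_ident has_derivative_scaleR_left
      has_derivative_inner_left Q_has_derivative sym_A sym_B)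

lemma continuous_on_straighten_deriv:
  "continuous_on UNIV (\<lambda>x. Blinfun (straighten_deriv z x))"
proof (rule continuous_on_blinfun_componentwise)
  fix h
  have "continuous_on UNIV (\<lambda>x. M *v x)" for M :: "real^'n^'n"
    by (simp add: linear_continuous_on matrix_vector_mul_bounded_linear)
  then show "continuous_on UNIV (\<lambda>x. Blinfun (straighten_deriv z x) h)"
    unfolding bounded_linear_Blinfun_apply[OF bounded_linear_straighten_deriv]
    unfolding straighten_deriv_def by (intro continuous_intros)
qed

lemma straighten_deriv_self:
  "straighten_deriv z z h = h + (h \<bullet> (A *v z)) *\<^sub>R dual_fst (A *v z) (B *v z)
                              + (h \<bullet> (B *v z)) *\<^sub>R dual_snd (A *v z) (B *v z)"
  unfolding straighten_deriv_def by (simp add: algebra_simps)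

lemma
  assumes "regular_point z"
  shows inner_straighten_A: "straighten z p \<bullet> (A *v z) = Q A p"
    and inner_straighten_B: "straighten z p \<bullet> (B *v z) = Q B p"
  using assms inner_dual[of "A *v z" "B *v z"]
  by (simp_all add: regular_point_def straighten_def inner_add_left)

lemma inj_straighten_deriv:
  assumes "regular_point z"
  shows "inj (straighten_deriv z z)"
proof (rule linear_injective_0[THEN iffD2])
  show "linear (straighten_deriv z z)"
    using bounded_linear_straighten_deriv bounded_linear.linear by blast
  have gram: "gram_det (A *v z) (B *v z) \<noteq> 0"
    using assms by (simp add: regular_point_def)
  show "\<forall>h. straighten_deriv z z h = 0 \<longrightarrow> h = 0"
  proof (intro allI impI)
    fix h
    assume h0: "straighten_deriv z z h = 0"
    have "straighten_deriv z z h \<bullet> (A *v z) = 2 * (h \<bullet> (A *v z))"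
         "straighten_deriv z z h \<bullet> (B *v z) = 2 * (h \<bullet> (B *v z))"
      unfolding straighten_deriv_self using inner_dual[OF gram] by (simp_all add: inner_add_left)
    then show "h = 0"
      using h0 straighten_deriv_self[of z h] by simp
  qed
qed

lemma tangent_curve:
  assumes z: "regular_point z" and v: "v \<bullet> (A *v z) = 0" "v \<bullet> (B *v z) = 0"
  obtains h where "(h \<longlongrightarrow> v) (at 0)"
    and "\<forall>\<^sub>F s in at 0. regular_point (z + s *\<^sub>R h s)"
proof -
  define D where "D x = Blinfun (straighten_deriv z x)" for x
  have D: "blinfun_apply (D x) = straighten_deriv z x" for x
    unfolding D_def by (rule bounded_linear_Blinfun_apply[OF bounded_linear_straighten_deriv])
  have "(straighten z has_derivative blinfun_apply (D x)) (at x)" for x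
    unfolding D by (rule straighten_has_derivative)
  moreover have "continuous_on UNIV D"
    unfolding D_def[abs_def] by (rule continuous_on_straighten_deriv)
  moreover have "inj (blinfun_apply (D z))"
    unfolding D by (rule inj_straighten_deriv[OF z])
  ultimately obtain h where h: "(h \<longlongrightarrow> v) (at 0)"
    and ev: "\<forall>\<^sub>F s in at 0. straighten z (z + s *\<^sub>R h s) = straighten z z + s *\<^sub>R D z v"
    by (rule curve_through_local_inverse)
  have "straighten z z = z" "D z v = v"
    using z v by (simp_all add: D straighten_def straighten_deriv_self regular_point_def Q_def)
  then have "\<forall>\<^sub>F s in at 0. straighten z (z + s *\<^sub>R h s) = z + s *\<^sub>R v"
    using ev by simp
  moreover have "((\<lambda>s. z + s *\<^sub>R h s) \<longlongrightarrow> z + 0 *\<^sub>R v) (at 0)"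
    by (intro tendsto_intros h)
  then have "\<forall>\<^sub>F s in at 0. gram_det (A *v (z + s *\<^sub>R h s)) (B *v (z + s *\<^sub>R h s)) \<noteq> 0"
    using z unfolding regular_point_def
    by (intro tendsto_imp_eventually_ne[OF isCont_tendsto_compose[OF isCont_gram_det]]) auto
  ultimately have "\<forall>\<^sub>F s in at 0. regular_point (z + s *\<^sub>R h s)"
  proof eventually_elim
    case (elim s)
    then show ?case
      using inner_straighten_A[OF z, of "z + s *\<^sub>R h s"] inner_straighten_B[OF z, of "z + s *\<^sub>R h s"]
        z v by (simp add: inner_add_left regular_point_def Q_def)
  qed
  with h that show ?thesis
    by blast
qed

end

section \<open>First- and second-order conditions\<close>

locale quadric_through_base_locus = sym_pair A B for A B :: "real^'n^'n" +
  fixes C :: "real^'n^'n"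
  assumes sym_C: "sym_mat C"
    and Q_C_vanishes: "\<And>z. Q A z = 0 \<Longrightarrow> Q B z = 0 \<Longrightarrow> Q C z = 0"
begin

definition coef_A :: "real^'n \<Rightarrow> real" where
  "coef_A z = (C *v z) \<bullet> dual_fst (A *v z) (B *v z)"

definition coef_B :: "real^'n \<Rightarrow> real" where
  "coef_B z = (C *v z) \<bullet> dual_snd (A *v z) (B *v z)"

definition defect :: "real^'n \<Rightarrow> real^'n^'n" where
  "defect z = C - coef_A z *\<^sub>R A - coef_B z *\<^sub>R B"

lemma defect_mult: "defect z *v y = C *v y - coef_A z *\<^sub>R (A *v y) - coef_B z *\<^sub>R (B *v y)"
  by (simp add: defect_def matrix_vector_mult_diff_rdistrib scaleR_matrix_vector_assoc)

lemma C_orthogonal_to_tangent: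
  assumes z: "regular_point z" and v: "v \<bullet> (A *v z) = 0" "v \<bullet> (B *v z) = 0"
  shows "v \<bullet> (C *v z) = 0"
proof -
  obtain h where h: "(h \<longlongrightarrow> v) (at 0)"
    and curve: "\<forall>\<^sub>F s in at 0. regular_point (z + s *\<^sub>R h s)"
    using tangent_curve[OF z v] by blast
  let ?F = "\<lambda>s. 2 * (h s \<bullet> (C *v z)) + s * Q C (h s)"
  have "((\<lambda>s. C *v h s) \<longlongrightarrow> C *v v) (at 0)"
    by (rule bounded_linear.tendsto[OF matrix_vector_mul_bounded_linear h])
  then have "(?F \<longlongrightarrow> 2 * (v \<bullet> (C *v z)) + 0 * Q C v) (at 0)"
    unfolding Q_def by (intro tendsto_intros h)
  moreover have "\<forall>\<^sub>F s in at 0. ?F s = 0"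
    using eventually_neq_at_within[of 0 0] curve
  proof eventually_elim
    case (elim s)
    have "Q C z = 0"
      using z unfolding regular_point_def by (blast intro: Q_C_vanishes)
    moreover have "Q C (z + s *\<^sub>R h s) = 0"
      using elim unfolding regular_point_def by (blast intro: Q_C_vanishes)
    moreover have "Q C (z + s *\<^sub>R h s) = Q C z + s * ?F s"
      using Q_add_scaleR[OF sym_C, of z s "h s"] by (simp add: algebra_simps power2_eq_square)
    ultimately have "s * ?F s = 0"
      by simp
    then show ?case
      using elim by simp
  qed
  ultimately have "2 * (v \<bullet> (C *v z)) + 0 * Q C v = 0"
    by (rule tendsto_unique_eventually_eq)
  then show ?thesis
    by simp
qed

lemma defect_mult_self:
  assumes "regular_point z"
  shows "defect z *v z = 0"
proof -
  have "gram_det (A *v z) (B *v z) \<noteq> 0"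
    using assms by (simp add: regular_point_def)
  then have "C *v z = coef_A z *\<^sub>R (A *v z) + coef_B z *\<^sub>R (B *v z)"
    unfolding coef_A_def coef_B_def
    by (rule eq_projection_if_orthogonal_to_complement)
      (use C_orthogonal_to_tangent[OF assms] in \<open>simp add: inner_commute\<close>)
  then show ?thesis
    by (simp add: defect_mult)
qed

lemma isCont_coef:
  assumes "regular_point z"
  shows "isCont coef_A z" "isCont coef_B z"
  using assms unfolding regular_point_def coef_A_def[abs_def] coef_B_def[abs_def]
    dual_fst_def dual_snd_def
  by (auto intro!: continuous_intros isCont_gram_det)

lemma defect_form_vanishes_on_tangent:
  assumes z: "regular_point z"
    and v: "v \<bullet> (A *v z) = 0" "v \<bullet> (B *v z) = 0"
    and x: "x \<bullet> (A *v z) = 0" "x \<bullet> (B *v z) = 0"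
  shows "x \<bullet> (defect z *v v) = 0"
proof -
  obtain h where h: "(h \<longlongrightarrow> v) (at 0)"
    and regular: "\<forall>\<^sub>F s in at 0. regular_point (z + s *\<^sub>R h s)"
    using tangent_curve[OF z v] by blast
  define \<gamma> where "\<gamma> s = z + s *\<^sub>R h s" for s
  have "(\<gamma> \<longlongrightarrow> z + 0 *\<^sub>R v) (at 0)"
    unfolding \<gamma>_def by (intro tendsto_intros h)
  then have \<gamma>: "(\<gamma> \<longlongrightarrow> z) (at 0)"
    by simp
  let ?F = "\<lambda>s. x \<bullet> (C *v h s) - coef_A (\<gamma> s) * (x \<bullet> (A *v h s)) - coef_B (\<gamma> s) * (x \<bullet> (B *v h s))"
  have "((\<lambda>s. M *v h s) \<longlongrightarrow> M *v v) (at 0)" for M :: "real^'n^'n"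
    by (rule bounded_linear.tendsto[OF matrix_vector_mul_bounded_linear h])
  then have "(?F \<longlongrightarrow> x \<bullet> (defect z *v v)) (at 0)"
    unfolding defect_mult inner_diff_right inner_scaleR_right
    by (intro tendsto_intros isCont_tendsto_compose[OF isCont_coef(1)[OF z] \<gamma>]
        isCont_tendsto_compose[OF isCont_coef(2)[OF z] \<gamma>])
  moreover have "\<forall>\<^sub>F s in at 0. ?F s = 0"
    using eventually_neq_at_within[of 0 0] regular
  proof eventually_elim
    case (elim s)
    have "x \<bullet> (C *v z) = 0"
      by (rule C_orthogonal_to_tangent[OF z x])
    moreover have "x \<bullet> (defect (\<gamma> s) *v \<gamma> s) = 0"
      using defect_mult_self[OF elim(2)[folded \<gamma>_def]] by simp
    ultimately have "s * ?F s = 0"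
      using x unfolding defect_mult \<gamma>_def
      by (simp add: matrix_vector_right_distrib matrix_vector_mult_scaleR inner_add_right
          inner_diff_right algebra_simps)
    then show ?case
      using elim(1) by simp
  qed
  ultimately show ?thesis
    by (rule tendsto_unique_eventually_eq)
qed

lemma rank_defect_le_4:
  assumes "regular_point z"
  shows "rank (defect z) \<le> 4"
proof (rule rank_le_4_if_form_vanishes_on_complement)
  show "gram_det (A *v z) (B *v z) \<noteq> 0"
    using assms by (simp add: regular_point_def)
qed (rule defect_form_vanishes_on_tangent[OF assms])

section \<open>Constancy of the coefficients\<close>

lemma coef_diff_inner:
  assumes "regular_point x" and "regular_point y"
  shows "(coef_A x - coef_A y) * (x \<bullet> (A *v y)) + (coef_B x - coef_B y) * (x \<bullet> (B *v y)) = 0"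
proof -
  have "x \<bullet> (defect x *v y) = y \<bullet> (defect x *v x)"
    unfolding defect_mult using sym_mat_inner_commute[OF sym_A] sym_mat_inner_commute[OF sym_B]
      sym_mat_inner_commute[OF sym_C]
    by (simp add: inner_diff_right)
  then have "x \<bullet> (defect x *v y) = x \<bullet> (defect y *v y)"
    using defect_mult_self[OF assms(1)] defect_mult_self[OF assms(2)] by simp
  then show ?thesis
    unfolding defect_mult by (simp add: inner_diff_right algebra_simps)
qed

lemma rank_coef_diff_le_8:
  assumes "regular_point x" and "regular_point y"
  shows "rank ((coef_A x - coef_A y) *\<^sub>R A + (coef_B x - coef_B y) *\<^sub>R B) \<le> 8"
proof -
  have "(coef_A x - coef_A y) *\<^sub>R A + (coef_B x - coef_B y) *\<^sub>R B = defect y - defect x"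
    by (simp add: defect_def algebra_simps)
  then show ?thesis
    using rank_diff_le[of "defect y" "defect x"] rank_defect_le_4[OF assms(1)]
      rank_defect_le_4[OF assms(2)] by simp
qed

lemma no_point_separated_from_spanning_set:
  assumes z: "regular_point z" and S: "\<forall>b\<in>S. regular_point b" "span S = UNIV"
    and sep: "\<forall>b\<in>S. (coef_A b, coef_B b) \<noteq> (coef_A z, coef_B z)"
    and rank: "rank (\<alpha> *\<^sub>R A + \<beta> *\<^sub>R B) > 16"
  shows False
proof -
  obtain b0 where b0: "b0 \<in> S"
    using spanning_set_nonempty[OF S(2)] by blast
  define d1 d2 where "d1 = coef_A b0 - coef_A z" and "d2 = coef_B b0 - coef_B z"
  show False
  proof (cases "\<exists>b\<in>S. d1 * (coef_B b - coef_B z) - d2 * (coef_A b - coef_A z) \<noteq> 0")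
    case True
    then obtain b where b: "b \<in> S" "d1 * (coef_B b - coef_B z) - d2 * (coef_A b - coef_A z) \<noteq> 0"
      by blast
    have "rank (d1 *\<^sub>R A + d2 *\<^sub>R B) \<le> 8"
         "rank ((coef_A b - coef_A z) *\<^sub>R A + (coef_B b - coef_B z) *\<^sub>R B) \<le> 8"
      unfolding d1_def d2_def using b(1) b0 S(1) z by (simp_all add: rank_coef_diff_le_8)
    with b(2) have "rank (\<alpha> *\<^sub>R A + \<beta> *\<^sub>R B) \<le> 2 * 8"
      by (rule rank_pencil_le_of_two_independent)
    then show False
      using rank by simp
  next
    case False
    define y where "y = d1 *\<^sub>R (A *v z) + d2 *\<^sub>R (B *v z)"
    have "orthogonal y b" if "b \<in> S" for b
    proof -
      have "d1 * (b \<bullet> (A *v z)) + d2 * (b \<bullet> (B *v z)) = 0"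
        using sep that False
        by (intro lincomb_eq_0_if_parallel[OF _ coef_diff_inner]) (auto simp: S(1) z)
      then show ?thesis
        by (simp add: orthogonal_def y_def inner_add_left inner_commute[of "A *v z"]
            inner_commute[of "B *v z"])
    qed
    then have "orthogonal y y"
      using orthogonal_to_span[of y S y] S(2) by simp
    then have "d1 = 0 \<and> d2 = 0"
      using gram_det_nonzero_imp_independent[of "A *v z" "B *v z" d1 d2] z
      by (simp add: orthogonal_def y_def regular_point_def)
    then show False
      using sep b0 by (auto simp: d1_def d2_def)
  qed
qed

lemma coef_constant_on_spanning_connected:
  assumes "connected K" and "\<forall>x\<in>K. regular_point x" and "span K = UNIV"
    and "rank (\<alpha> *\<^sub>R A + \<beta> *\<^sub>R B) > 16"
  obtains a b where "\<forall>x\<in>K. coef_A x = a \<and> coef_B x = b"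
proof (rule ccontr)
  let ?coefs = "\<lambda>x. (coef_A x, coef_B x)"
  assume "\<not> thesis"
  then have nonconst: "\<not> (\<forall>x\<in>K. coef_A x = a \<and> coef_B x = b)" for a b
    using that by blast
  then obtain x where x: "x \<in> K"
    by blast
  then obtain y where y: "y \<in> K" "?coefs x \<noteq> ?coefs y"
    using nonconst[of "coef_A x" "coef_B x"] by auto
  obtain S where S: "S \<subseteq> K" "independent S" "K \<subseteq> span S"
    by (rule maximal_independent_subset)
  have "continuous_on K ?coefs"
    using assms(2) isCont_coef
    by (intro continuous_at_imp_continuous_on ballI continuous_Pair) auto
  then obtain z where z: "z \<in> K" "?coefs z \<notin> ?coefs ` S"
    using connected_image_avoids_finite[OF assms(1) _ finiteI_independent[OF S(2)] x y] by blast
  have "span S = UNIV"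
    using span_mono[OF S(3)] assms(3) by (simp add: span_span top_unique)
  moreover have "\<forall>b\<in>S. ?coefs b \<noteq> ?coefs z"
    using z(2) by (metis (no_types, lifting) image_eqI)
  moreover have "\<forall>b\<in>S. regular_point b"
    using S(1) assms(2) by blast
  ultimately show False
    using no_point_separated_from_spanning_set[OF _ _ _ _ assms(4)] z(1) assms(2) by blast
qed

lemma C_eq_if_coef_constant:
  assumes "span K = UNIV" and "\<forall>x\<in>K. regular_point x \<and> coef_A x = a \<and> coef_B x = b"
  shows "C = a *\<^sub>R A + b *\<^sub>R B"
proof -
  let ?D = "C - a *\<^sub>R A - b *\<^sub>R B"
  have "K \<subseteq> {x. ?D *v x = 0}"
    using assms(2) defect_mult_self by (auto simp: defect_def)
  then have "span K \<subseteq> {x. ?D *v x = 0}"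
    by (rule span_minimal) (simp add: subspace_def matrix_vector_right_distrib matrix_vector_mult_scaleR)
  then have "?D = 0"
    using assms(1) by (auto simp: matrix_eq)
  then show ?thesis
    by (simp add: algebra_simps)
qed

end

theorem theorem3p12:
  fixes A B C :: "real^'n^'n"
  assumes "sym_mat A" and "sym_mat B" and "sym_mat C"
    and "independent {A, B}" and "A \<noteq> B"
    and "non_dissipative A B"
    and "maxrank A B \<ge> 17"
    and "\<forall>z. Q A z = 0 \<and> Q B z = 0 \<longrightarrow> Q C z = 0"
    and "\<exists>z\<in>Nset A B. span (connected_component_set (Nset A B) z) = UNIV"
  shows "\<exists>a b. C = a *\<^sub>R A + b *\<^sub>R B"
proof -
  interpret quadric_through_base_locus A B C
    using assms(1-3,8) by unfold_locales auto
  obtain z0 where span: "span (connected_component_set (Nset A B) z0) = UNIV"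
    using assms(9) by blast
  let ?K = "connected_component_set (Nset A B) z0"
  have regular: "\<forall>x\<in>?K. regular_point x"
    using connected_component_subset Nset_regular by blast
  obtain \<alpha> \<beta> where "rank (\<alpha> *\<^sub>R A + \<beta> *\<^sub>R B) = maxrank A B"
    by (rule maxrank_attained)
  then have "rank (\<alpha> *\<^sub>R A + \<beta> *\<^sub>R B) > 16"
    using assms(7) by simp
  then obtain a b where "\<forall>x\<in>?K. coef_A x = a \<and> coef_B x = b"
    by (rule coef_constant_on_spanning_connected[OF connected_connected_component regular span])
  then have "C = a *\<^sub>R A + b *\<^sub>R B"
    using C_eq_if_coef_constant[OF span] regular by blast
  then show ?thesis
    by blast
qed

end
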